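(* Let $\mathcal X$ be a set, $k:\mathcal X\times\mathcal X\to\mathbb R$ any positive-semidefinite kernel, and define $\tilde k(x,x')=k(x,x)$ if $x=x'$ and $\tilde k(x,x')=0$ if $x\ne x'$. Let $x_1,x_2,\dots\in\mathcal X$ be any points (repetitions allowed) with observations, and for $t\ge0$ let $\sigma_t^2$ and $\tilde\sigma_t^2$ denote the GP posterior predictive variances, with Gaussian noise variance $\sigma_\epsilon^2>0$, of GP models with prior covariance $k$ and $\tilde k$ respectively, both conditioned on the observations at $x_1,\dots,x_t$. Then for all $t\ge0$ and all $x\in\mathcal X$, $$\sigma_t^2(x)\le\tilde\sigma_t^2(x)=\frac{\sigma_\epsilon^2\,\tilde\sigma_0^2(x)}{\sigma_\epsilon^2+N_t(x)\,\tilde\sigma_0^2(x)},$$ where $N_t(x)=\sum_{i=1}^t\mathbb 1\{x_i=x\}$ and $\tilde\sigma_0^2(x)=\sigma_0^2(x)=k(x,x)$.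
   Context: For a prior covariance $c$ and observation points $x_1,\dots,x_t$, the GP posterior variance with noise variance $\sigma_\epsilon^2$ is $\sigma_t^2(x)=c(x,x)-\mathbf c_t(x)^\top(\mathbf C_t+\sigma_\epsilon^2I)^{-1}\mathbf c_t(x)$, where $\mathbf c_t(x)=[c(x,x_i)]_{i=1}^t$ and $\mathbf C_t=[c(x_i,x_j)]_{i,j=1}^t$; for $t=0$ it is $c(x,x)$. It does not depend on the observed values. *)

theory Defs
  imports Complex_Main "Jordan_Normal_Form.Matrix" "Jordan_Normal_Form.Gauss_Jordan_Elimination"
begin

definition psd_kernel :: "('a \<Rightarrow> 'a \<Rightarrow> real) \<Rightarrow> bool" where
  "psd_kernel k \<longleftrightarrow> (\<forall>x y. k x y = k y x) \<and>
     (\<forall>(n::nat) (ys::nat \<Rightarrow> 'a) (a::nat \<Rightarrow> real).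
        0 \<le> (\<Sum>i<n. \<Sum>j<n. a i * a j * k (ys i) (ys j)))"

definition diag_kernel :: "('a \<Rightarrow> 'a \<Rightarrow> real) \<Rightarrow> 'a \<Rightarrow> 'a \<Rightarrow> real" where
  "diag_kernel k x x' = (if x = x' then k x x else 0)"

(* observation points x_1, x_2, ... are xs 1, xs 2, ...; the value of xs 0 is irrelevant *)
definition kvec :: "('a \<Rightarrow> 'a \<Rightarrow> real) \<Rightarrow> (nat \<Rightarrow> 'a) \<Rightarrow> nat \<Rightarrow> 'a \<Rightarrow> real vec" where
  "kvec c xs t x = vec t (\<lambda>i. c x (xs (Suc i)))"

definition kmat :: "('a \<Rightarrow> 'a \<Rightarrow> real) \<Rightarrow> (nat \<Rightarrow> 'a) \<Rightarrow> nat \<Rightarrow> real mat" where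
  "kmat c xs t = mat t t (\<lambda>(i, j). c (xs (Suc i)) (xs (Suc j)))"

definition post_var :: "('a \<Rightarrow> 'a \<Rightarrow> real) \<Rightarrow> real \<Rightarrow> (nat \<Rightarrow> 'a) \<Rightarrow> nat \<Rightarrow> 'a \<Rightarrow> real" where
  "post_var c s2 xs t x =
     c x x - scalar_prod (kvec c xs t x)
       (mult_mat_vec (the (mat_inverse (kmat c xs t + s2 \<cdot>\<^sub>m 1\<^sub>m t))) (kvec c xs t x))"

definition count_obs :: "(nat \<Rightarrow> 'a) \<Rightarrow> nat \<Rightarrow> 'a \<Rightarrow> nat" where
  "count_obs xs t x = card {i \<in> {1..t}. xs i = x}"

end

theory Submission imports Defs "Jordan_Normal_Form.Determinant" begin

text \<open>
  The posterior variance is the minimum over weight vectors \<open>a\<close> of the quadratic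
  \<open>c(x,x) - 2 \<Sum>\<^sub>i a\<^sub>i c(x,x\<^sub>i) + \<Sum>\<^sub>i\<^sub>j a\<^sub>i a\<^sub>j (C + \<sigma>\<^sub>\<epsilon>\<^sup>2 I)\<^sub>i\<^sub>j\<close>, attained at the solution of
  \<open>(C + \<sigma>\<^sub>\<epsilon>\<^sup>2 I) a = c(x,\<cdot>)\<close>. For the diagonal kernel this system is solved explicitly by
  the weights \<open>k(x,x) / (\<sigma>\<^sub>\<epsilon>\<^sup>2 + N\<^sub>t(x) k(x,x))\<close> on the observations at \<open>x\<close> and zero elsewhere,
  which gives the closed form. These weights only involve the points equal to \<open>x\<close>, where
  \<open>k\<close> and \<open>k\<^sub>~\<close> agree, so the quadratic for \<open>k\<close> at these weights equals the posterior
  variance for \<open>k\<^sub>~\<close>; minimality of the quadratic for \<open>k\<close> gives the inequality.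
\<close>

lemma quadratic_le_at_solution:
  fixes M :: "nat \<Rightarrow> nat \<Rightarrow> real"
  assumes sym: "\<And>i j. M i j = M j i"
    and psd: "0 \<le> (\<Sum>i<t. \<Sum>j<t. (a i - b i) * (a j - b j) * M i j)"
    and sol: "\<And>i. i < t \<Longrightarrow> (\<Sum>j<t. M i j * b j) = v i"
  shows "2 * (\<Sum>i<t. a i * v i) - (\<Sum>i<t. \<Sum>j<t. a i * a j * M i j) \<le> (\<Sum>i<t. v i * b i)"
proof -
  have expand: "(\<Sum>i<t. \<Sum>j<t. (a i - b i) * (a j - b j) * M i j) =
     (\<Sum>i<t. \<Sum>j<t. a i * a j * M i j) - (\<Sum>i<t. \<Sum>j<t. a i * (M i j * b j))
     - (\<Sum>i<t. \<Sum>j<t. b i * a j * M i j) + (\<Sum>i<t. \<Sum>j<t. b i * (M i j * b j))"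
    by (simp add: sum_subtractf sum.distrib algebra_simps)
  have ab: "(\<Sum>i<t. \<Sum>j<t. a i * (M i j * b j)) = (\<Sum>i<t. a i * v i)"
    by (simp add: sum_distrib_left[symmetric] sol)
  have bb: "(\<Sum>i<t. \<Sum>j<t. b i * (M i j * b j)) = (\<Sum>i<t. v i * b i)"
  proof -
    have "(\<Sum>i<t. \<Sum>j<t. b i * (M i j * b j)) = (\<Sum>i<t. b i * (\<Sum>j<t. M i j * b j))"
      by (simp only: sum_distrib_left)
    also have "\<dots> = (\<Sum>i<t. b i * v i)" by (intro sum.cong refl) (simp add: sol)
    finally show ?thesis by (simp add: mult.commute)
  qed
  have "(\<Sum>i<t. \<Sum>j<t. b i * a j * M i j) = (\<Sum>j<t. \<Sum>i<t. b i * a j * M i j)"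
    by (rule sum.swap)
  also have "\<dots> = (\<Sum>j<t. a j * (\<Sum>i<t. M j i * b i))"
    by (simp add: sum_distrib_left sym algebra_simps)
  finally have ba: "(\<Sum>i<t. \<Sum>j<t. b i * a j * M i j) = (\<Sum>j<t. a j * v j)"
    by (simp add: sol)
  show ?thesis using psd unfolding expand ab ba bb by linarith
qed

lemma psd_kernel_diag_nonneg:
  assumes "psd_kernel k"
  shows "0 \<le> k x x"
  using assms[unfolded psd_kernel_def, THEN conjunct2, rule_format,
      where n=1 and ys="\<lambda>_. x" and a="\<lambda>_. 1"]
  by simp

lemma diag_kernel_same [simp]: "diag_kernel k x x = k x x"
  by (simp add: diag_kernel_def)

lemma psd_kernel_diag_kernel:
  assumes "psd_kernel k"
  shows "psd_kernel (diag_kernel k)"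
  unfolding psd_kernel_def
proof (intro conjI allI)
  fix x y show "diag_kernel k x y = diag_kernel k y x" by (simp add: diag_kernel_def)
next
  fix n :: nat and ys :: "nat \<Rightarrow> 'a" and a :: "nat \<Rightarrow> real"
  define S where "S v = (\<Sum>j\<in>{j\<in>{..<n}. ys j = v}. a j)" for v
  have row: "(\<Sum>j<n. a i * a j * diag_kernel k (ys i) (ys j)) = a i * k (ys i) (ys i) * S (ys i)"
    for i
  proof -
    have "(\<Sum>j<n. a i * a j * diag_kernel k (ys i) (ys j)) =
       (\<Sum>j<n. if ys j = ys i then a i * k (ys i) (ys i) * a j else 0)"
      by (intro sum.cong refl) (auto simp: diag_kernel_def)
    also have "\<dots> = (\<Sum>j\<in>{j\<in>{..<n}. ys j = ys i}. a i * k (ys i) (ys i) * a j)"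
      by (rule sum.inter_filter[symmetric]) simp
    finally show ?thesis by (simp add: S_def sum_distrib_left)
  qed
  have "(\<Sum>i<n. \<Sum>j<n. a i * a j * diag_kernel k (ys i) (ys j))
      = (\<Sum>v\<in>ys ` {..<n}. \<Sum>i\<in>{i\<in>{..<n}. ys i = v}. a i * k (ys i) (ys i) * S (ys i))"
    unfolding row by (rule sum.image_gen) simp
  also have "\<dots> = (\<Sum>v\<in>ys ` {..<n}. k v v * (S v * S v))"
  proof (intro sum.cong refl)
    fix v
    have "(\<Sum>i\<in>{i\<in>{..<n}. ys i = v}. a i * k (ys i) (ys i) * S (ys i)) =
          (\<Sum>i\<in>{i\<in>{..<n}. ys i = v}. a i * (k v v * S v))"
      by (intro sum.cong refl) auto
    then show "(\<Sum>i\<in>{i\<in>{..<n}. ys i = v}. a i * k (ys i) (ys i) * S (ys i)) = k v v * (S v * S v)"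
      by (simp add: S_def sum_distrib_right[symmetric] algebra_simps)
  qed
  also have "0 \<le> \<dots>"
    by (intro sum_nonneg) (simp add: psd_kernel_diag_nonneg[OF assms])
  finally show "0 \<le> (\<Sum>i<n. \<Sum>j<n. a i * a j * diag_kernel k (ys i) (ys j))" .
qed

definition noisy_gram :: "('a \<Rightarrow> 'a \<Rightarrow> real) \<Rightarrow> real \<Rightarrow> (nat \<Rightarrow> 'a) \<Rightarrow> nat \<Rightarrow> nat \<Rightarrow> real" where
  "noisy_gram c s2 xs i j = c (xs (Suc i)) (xs (Suc j)) + (if i = j then s2 else 0)"

lemma noisy_gram_sym: "psd_kernel c \<Longrightarrow> noisy_gram c s2 xs i j = noisy_gram c s2 xs j i"
  unfolding noisy_gram_def psd_kernel_def by auto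

lemma noisy_gram_quad_ge:
  assumes "psd_kernel c"
  shows "s2 * (\<Sum>i<t. d i * d i) \<le> (\<Sum>i<t. \<Sum>j<t. d i * d j * noisy_gram c s2 xs i j)"
proof -
  have "(\<Sum>i<t. \<Sum>j<t. d i * d j * noisy_gram c s2 xs i j) =
     (\<Sum>i<t. \<Sum>j<t. d i * d j * c (xs (Suc i)) (xs (Suc j)))
       + (\<Sum>i<t. \<Sum>j<t. d i * d j * (if i = j then s2 else 0))"
    by (simp add: noisy_gram_def sum.distrib algebra_simps)
  also have "(\<Sum>i<t. \<Sum>j<t. d i * d j * (if i = j then s2 else 0)) = s2 * (\<Sum>i<t. d i * d i)"
    by (simp add: if_distrib sum_distrib_left algebra_simps cong: if_cong)
  finally show ?thesis
    using assms unfolding psd_kernel_def by (simp add: add_increasing)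
qed

lemma noisy_gram_solution_unique:
  assumes "psd_kernel c" "s2 > 0"
    and a: "\<And>i. i < t \<Longrightarrow> (\<Sum>j<t. noisy_gram c s2 xs i j * a j) = v i"
    and b: "\<And>i. i < t \<Longrightarrow> (\<Sum>j<t. noisy_gram c s2 xs i j * b j) = v i"
    and "i < t"
  shows "a i = b i"
proof -
  define d where "d j = a j - b j" for j
  have "(\<Sum>i<t. \<Sum>j<t. d i * d j * noisy_gram c s2 xs i j)
      = (\<Sum>i<t. d i * (\<Sum>j<t. noisy_gram c s2 xs i j * d j))"
    by (simp add: sum_distrib_left algebra_simps)
  also have "\<dots> = 0"
    by (simp add: d_def right_diff_distrib sum_subtractf a b)
  finally have "s2 * (\<Sum>i<t. d i * d i) \<le> 0"
    using noisy_gram_quad_ge[OF assms(1), of s2 d t xs] by simp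
  moreover have "0 \<le> (\<Sum>i<t. d i * d i)" by (simp add: sum_nonneg)
  ultimately have "(\<Sum>i<t. d i * d i) = 0"
    using \<open>s2 > 0\<close> by (simp add: mult_le_0_iff)
  with \<open>i < t\<close> have "d i * d i = 0"
    by (subst (asm) sum_nonneg_eq_0_iff) auto
  then show ?thesis by (simp add: d_def)
qed

lemma noisy_gram_mult_vec:
  assumes "v \<in> carrier_vec t" "i < t"
  shows "((kmat c xs t + s2 \<cdot>\<^sub>m 1\<^sub>m t) *\<^sub>v v) $ i = (\<Sum>j<t. noisy_gram c s2 xs i j * v $ j)"
  using assms
  by (auto simp: kmat_def noisy_gram_def scalar_prod_def lessThan_atLeast0 intro!: sum.cong)

lemma det_noisy_gram_nonzero:
  assumes "psd_kernel c" "s2 > 0"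
  shows "det (kmat c xs t + s2 \<cdot>\<^sub>m 1\<^sub>m t) \<noteq> 0"
proof
  let ?A = "kmat c xs t + s2 \<cdot>\<^sub>m 1\<^sub>m t"
  assume "det ?A = 0"
  then obtain v where v: "v \<in> carrier_vec t" "v \<noteq> 0\<^sub>v t" "?A *\<^sub>v v = 0\<^sub>v t"
    using det_0_iff_vec_prod_zero_field[of ?A t] by (auto simp: kmat_def)
  have "(\<Sum>j<t. noisy_gram c s2 xs i j * v $ j) = 0" if "i < t" for i
    using noisy_gram_mult_vec[OF v(1) that, of c xs s2] v(3) that by simp
  then have "v $ i = 0" if "i < t" for i
    using noisy_gram_solution_unique[OF assms,
        where a="\<lambda>j. v $ j" and b="\<lambda>_. 0" and v="\<lambda>_. 0" and i=i and t=t and xs=xs] that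
    by simp
  then have "v = 0\<^sub>v t" using v(1) by (intro eq_vecI) auto
  with v(2) show False by simp
qed

lemma post_var_obtain_solution:
  assumes "psd_kernel c" "s2 > 0"
  obtains b where "\<And>i. i < t \<Longrightarrow> (\<Sum>j<t. noisy_gram c s2 xs i j * b j) = c x (xs (Suc i))"
    and "post_var c s2 xs t x = c x x - (\<Sum>i<t. c x (xs (Suc i)) * b i)"
proof -
  define A where "A = kmat c xs t + s2 \<cdot>\<^sub>m 1\<^sub>m t"
  have A: "A \<in> carrier_mat t t" by (simp add: A_def kmat_def)
  have "A \<in> Units (ring_mat TYPE(real) t ())"
    using det_non_zero_imp_unit[OF A] det_noisy_gram_nonzero[OF assms] by (simp add: A_def)
  then obtain B where B: "mat_inverse A = Some B"
    using mat_inverse(1)[OF A] by fastforce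
  from mat_inverse(2)[OF A B] have AB: "A * B = 1\<^sub>m t" and Bc: "B \<in> carrier_mat t t" by auto
  define v where "v = kvec c xs t x"
  have v: "v \<in> carrier_vec t" by (simp add: v_def kvec_def)
  define w where "w = B *\<^sub>v v"
  have w: "w \<in> carrier_vec t" using Bc v by (simp add: w_def)
  have "A *\<^sub>v w = v"
    unfolding w_def using assoc_mult_mat_vec[OF A Bc v, symmetric] AB v by simp
  then have "(\<Sum>j<t. noisy_gram c s2 xs i j * w $ j) = c x (xs (Suc i))" if "i < t" for i
    using noisy_gram_mult_vec[OF w that, of c xs s2] that by (simp add: A_def v_def kvec_def)
  moreover have "post_var c s2 xs t x = c x x - (\<Sum>i<t. c x (xs (Suc i)) * w $ i)"
    unfolding post_var_def A_def[symmetric] v_def[symmetric] B w_def[symmetric] option.sel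
    using w by (simp add: scalar_prod_def v_def kvec_def lessThan_atLeast0)
  ultimately show ?thesis using that by blast
qed

lemma post_var_eq_of_solution:
  assumes "psd_kernel c" "s2 > 0"
    and sol: "\<And>i. i < t \<Longrightarrow> (\<Sum>j<t. noisy_gram c s2 xs i j * a j) = c x (xs (Suc i))"
  shows "post_var c s2 xs t x = c x x - (\<Sum>i<t. c x (xs (Suc i)) * a i)"
proof -
  obtain b where b: "\<And>i. i < t \<Longrightarrow> (\<Sum>j<t. noisy_gram c s2 xs i j * b j) = c x (xs (Suc i))"
    and post: "post_var c s2 xs t x = c x x - (\<Sum>i<t. c x (xs (Suc i)) * b i)"
    using post_var_obtain_solution[OF assms(1,2), where t=t and xs=xs and x=x] by blast
  have "b i = a i" if "i < t" for i
    using noisy_gram_solution_unique[OF assms(1,2) b sol that] .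
  then show ?thesis using post by simp
qed

lemma post_var_zero: "psd_kernel c \<Longrightarrow> s2 > 0 \<Longrightarrow> post_var c s2 xs 0 x = c x x"
  using post_var_eq_of_solution[where t=0] by simp

lemma post_var_le_quadratic:
  assumes "psd_kernel c" "s2 > 0"
  shows "post_var c s2 xs t x \<le> c x x - 2 * (\<Sum>i<t. a i * c x (xs (Suc i)))
           + (\<Sum>i<t. \<Sum>j<t. a i * a j * noisy_gram c s2 xs i j)"
proof -
  obtain b where b: "\<And>i. i < t \<Longrightarrow> (\<Sum>j<t. noisy_gram c s2 xs i j * b j) = c x (xs (Suc i))"
    and post: "post_var c s2 xs t x = c x x - (\<Sum>i<t. c x (xs (Suc i)) * b i)"
    using post_var_obtain_solution[OF assms, where t=t and xs=xs and x=x] by blast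
  have "0 \<le> (\<Sum>i<t. \<Sum>j<t. (a i - b i) * (a j - b j) * noisy_gram c s2 xs i j)"
    using noisy_gram_quad_ge[OF assms(1), of s2 "\<lambda>i. a i - b i" t xs] \<open>s2 > 0\<close>
    by (smt (verit) mult_nonneg_nonneg sum_nonneg zero_le_square)
  from quadratic_le_at_solution[OF noisy_gram_sym[OF assms(1)] this b]
  show ?thesis using post by linarith
qed

lemma count_obs_eq_card_shifted:
  "count_obs xs t x = card {j \<in> {..<t}. xs (Suc j) = x}"
proof -
  have "{i \<in> {1..t}. xs i = x} = Suc ` {j \<in> {..<t}. xs (Suc j) = x}"
  proof (intro equalityI subsetI)
    fix i assume "i \<in> {i \<in> {1..t}. xs i = x}"
    then have "i - 1 \<in> {j \<in> {..<t}. xs (Suc j) = x}" "i = Suc (i - 1)" by auto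
    then show "i \<in> Suc ` {j \<in> {..<t}. xs (Suc j) = x}" by (metis imageI)
  qed auto
  then show ?thesis unfolding count_obs_def by (simp add: card_image)
qed

lemma sum_if_obs_eq:
  "(\<Sum>j<t. if xs (Suc j) = x then r else 0) = real (count_obs xs t x) * r"
  by (simp add: sum.inter_filter[symmetric] count_obs_eq_card_shifted)

definition diag_weights :: "('a \<Rightarrow> 'a \<Rightarrow> real) \<Rightarrow> real \<Rightarrow> (nat \<Rightarrow> 'a) \<Rightarrow> nat \<Rightarrow> 'a \<Rightarrow> nat \<Rightarrow> real"
  where "diag_weights k s2 xs t x j =
    (if xs (Suc j) = x then k x x / (s2 + real (count_obs xs t x) * k x x) else 0)"

lemma diag_weights_denom_pos:
  "psd_kernel k \<Longrightarrow> s2 > 0 \<Longrightarrow> 0 < s2 + real (count_obs xs t x) * k x x"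
  using psd_kernel_diag_nonneg[of k x] by (simp add: add_pos_nonneg)

lemma sum_diag_kernel_diag_weights:
  "(\<Sum>j<t. diag_kernel k y (xs (Suc j)) * diag_weights k s2 xs t x j) =
     (if y = x then real (count_obs xs t x) * (k x x * (k x x / (s2 + real (count_obs xs t x) * k x x)))
      else 0)"
proof -
  have "(\<Sum>j<t. diag_kernel k y (xs (Suc j)) * diag_weights k s2 xs t x j) =
     (\<Sum>j<t. if xs (Suc j) = x
              then (if y = x then k x x * (k x x / (s2 + real (count_obs xs t x) * k x x)) else 0)
              else 0)"
    by (intro sum.cong refl) (auto simp: diag_kernel_def diag_weights_def)
  then show ?thesis by (simp only: sum_if_obs_eq) simp
qed

lemma diag_weights_solve:
  assumes "psd_kernel k" "s2 > 0" "i < t"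
  shows "(\<Sum>j<t. noisy_gram (diag_kernel k) s2 xs i j * diag_weights k s2 xs t x j)
           = diag_kernel k x (xs (Suc i))"
proof -
  let ?a = "diag_weights k s2 xs t x"
  have "(\<Sum>j<t. (if i = j then s2 else 0) * ?a j) = (\<Sum>j<t. if j = i then s2 * ?a j else 0)"
    by (intro sum.cong) auto
  also have "\<dots> = s2 * ?a i" using \<open>i < t\<close> by simp
  finally have "(\<Sum>j<t. noisy_gram (diag_kernel k) s2 xs i j * ?a j)
      = (\<Sum>j<t. diag_kernel k (xs (Suc i)) (xs (Suc j)) * ?a j) + s2 * ?a i"
    unfolding noisy_gram_def distrib_right sum.distrib by simp
  moreover have "real (count_obs xs t x) * (k x x * (k x x / (s2 + real (count_obs xs t x) * k x x)))
      + s2 * (k x x / (s2 + real (count_obs xs t x) * k x x)) = k x x"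
    using diag_weights_denom_pos[OF assms(1,2), of xs t x]
    by (simp add: divide_simps) (simp add: algebra_simps)
  ultimately show ?thesis
    unfolding sum_diag_kernel_diag_weights by (auto simp: diag_kernel_def diag_weights_def)
qed

lemma post_var_diag_kernel_eq_weights:
  assumes "psd_kernel k" "s2 > 0"
  shows "post_var (diag_kernel k) s2 xs t x
           = k x x - (\<Sum>i<t. diag_kernel k x (xs (Suc i)) * diag_weights k s2 xs t x i)"
  using post_var_eq_of_solution[OF psd_kernel_diag_kernel[OF assms(1)] assms(2) diag_weights_solve[OF assms]]
  by simp

lemma post_var_diag_kernel:
  assumes "psd_kernel k" "s2 > 0"
  shows "post_var (diag_kernel k) s2 xs t x = s2 * k x x / (s2 + real (count_obs xs t x) * k x x)"
  using diag_weights_denom_pos[OF assms, of xs t x]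
  by (simp add: post_var_diag_kernel_eq_weights[OF assms] sum_diag_kernel_diag_weights field_simps)

lemma post_var_le_diag_kernel:
  assumes "psd_kernel k" "s2 > 0"
  shows "post_var k s2 xs t x \<le> post_var (diag_kernel k) s2 xs t x"
proof -
  let ?a = "diag_weights k s2 xs t x" and ?k = "diag_kernel k"
  have lin: "(\<Sum>i<t. ?a i * k x (xs (Suc i))) = (\<Sum>i<t. ?a i * ?k x (xs (Suc i)))"
    by (intro sum.cong refl) (auto simp: diag_weights_def diag_kernel_def)
  have "(\<Sum>i<t. \<Sum>j<t. ?a i * ?a j * noisy_gram k s2 xs i j)
      = (\<Sum>i<t. \<Sum>j<t. ?a i * ?a j * noisy_gram ?k s2 xs i j)"
    by (intro sum.cong refl) (auto simp: diag_weights_def diag_kernel_def noisy_gram_def)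
  also have "\<dots> = (\<Sum>i<t. ?a i * (\<Sum>j<t. noisy_gram ?k s2 xs i j * ?a j))"
    by (simp add: sum_distrib_left algebra_simps)
  also have "\<dots> = (\<Sum>i<t. ?a i * ?k x (xs (Suc i)))"
    by (simp add: diag_weights_solve[OF assms])
  finally have quad: "(\<Sum>i<t. \<Sum>j<t. ?a i * ?a j * noisy_gram k s2 xs i j)
      = (\<Sum>i<t. ?a i * ?k x (xs (Suc i)))" .
  show ?thesis
    using post_var_le_quadratic[OF assms, of xs t x ?a] post_var_diag_kernel_eq_weights[OF assms]
    unfolding lin quad by (simp add: mult.commute)
qed

theorem mainTheorem4:
  fixes k :: "'a \<Rightarrow> 'a \<Rightarrow> real" and xs :: "nat \<Rightarrow> 'a" and s2 :: real
  assumes "psd_kernel k" and "s2 > 0"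
  shows "\<forall>(t::nat) (x::'a).
     post_var k s2 xs t x \<le> post_var (diag_kernel k) s2 xs t x \<and>
     post_var (diag_kernel k) s2 xs t x =
       s2 * post_var (diag_kernel k) s2 xs 0 x /
         (s2 + real (count_obs xs t x) * post_var (diag_kernel k) s2 xs 0 x) \<and>
     post_var (diag_kernel k) s2 xs 0 x = post_var k s2 xs 0 x \<and>
     post_var k s2 xs 0 x = k x x"
  using post_var_le_diag_kernel[OF assms] post_var_diag_kernel[OF assms] post_var_zero[OF assms]
    post_var_zero[OF psd_kernel_diag_kernel[OF assms(1)] assms(2)]
  by simp

end
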